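(* Every almost zero-dimensional space that is rim-$\sigma$-compact, or that is rational, is zero-dimensional.
   Context: All spaces are separable and metrizable. A subset $A$ of $X$ is a C-set in $X$ if it is an intersection of clopen subsets of $X$. $X$ is almost zero-dimensional if every point has a neighborhood basis consisting of C-sets in $X$. $X$ is rim-$\sigma$-compact if it has a basis of open sets with $\sigma$-compact boundaries, and rational if it has a basis of open sets with countable boundaries. *)

theory Defs
  imports "HOL-Analysis.Analysis"
begin

definition C_set :: "'a topology \<Rightarrow> 'a set \<Rightarrow> bool" where
  "C_set X A \<longleftrightarrow>
     (\<exists>\<U>. (\<forall>U\<in>\<U>. closedin X U \<and> openin X U) \<and> A = topspace X \<inter> \<Inter>\<U>)"

definition almost_zero_dimensional :: "'a topology \<Rightarrow> bool" where
  "almost_zero_dimensional X \<longleftrightarrow> neighbourhood_base_of (C_set X) X"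

definition sigma_compactin :: "'a topology \<Rightarrow> 'a set \<Rightarrow> bool" where
  "sigma_compactin X S \<longleftrightarrow>
     (\<exists>\<K>. countable \<K> \<and> (\<forall>K\<in>\<K>. compactin X K) \<and> \<Union>\<K> = S)"

definition rim_sigma_compact :: "'a topology \<Rightarrow> bool" where
  "rim_sigma_compact X \<longleftrightarrow>
     (\<exists>\<B>. (\<forall>B\<in>\<B>. openin X B \<and> sigma_compactin X (X frontier_of B)) \<and>
          (\<forall>U x. openin X U \<and> x \<in> U \<longrightarrow> (\<exists>B\<in>\<B>. x \<in> B \<and> B \<subseteq> U)))"

definition rational_space :: "'a topology \<Rightarrow> bool" where
  "rational_space X \<longleftrightarrow>
     (\<exists>\<B>. (\<forall>B\<in>\<B>. openin X B \<and> countable (X frontier_of B)) \<and>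
          (\<forall>U x. openin X U \<and> x \<in> U \<longrightarrow> (\<exists>B\<in>\<B>. x \<in> B \<and> B \<subseteq> U)))"

end

theory Submission
  imports Defs
begin

text \<open>Let \<open>x \<in> B\<close> with \<open>B\<close> open and \<open>X frontier_of B = (\<Union>n. K n)\<close>, each \<open>K n\<close> compact.
  By almost zero-dimensionality and second countability, \<open>B\<close> is covered by open sets
  \<open>e i \<subseteq> A i \<subseteq> B\<close> with \<open>A i\<close> a C-set. A compact set disjoint from a C-set is separated
  from it by a clopen set, so there are clopen \<open>R n \<supseteq> K n\<close> missing \<open>A 0, \<dots>, A n\<close>.
  Each \<open>e i\<close> meets only \<open>R 0, \<dots>, R (i - 1)\<close>, so \<open>B - (\<Union>n. R n)\<close> is open; it is
  closed because the \<open>R n\<close> cover the frontier of \<open>B\<close>. Letting every \<open>R n\<close> also miss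
  the \<open>A i\<close> containing \<open>x\<close> yields a clopen neighbourhood of \<open>x\<close> inside \<open>B\<close>.
  Rational spaces are rim-\<open>\<sigma>\<close>-compact because countable sets are \<open>\<sigma>\<close>-compact.\<close>

lemma metrizable_separable_imp_second_countable:
  assumes "metrizable_space X" "separable_space X"
  shows "second_countable X"
proof -
  obtain M d where md: "Metric_space M d" and X: "X = Metric_space.mtopology M d"
    using assms(1) metrizable_space_def by blast
  interpret Metric_space M d by (rule md)
  obtain C where C: "countable C" "C \<subseteq> M" "mtopology closure_of C = M"
    using assms(2) unfolding separable_space_def X by auto
  define \<B> where "\<B> = (\<lambda>(c,n::nat). mball c (1 / Suc n)) ` (C \<times> UNIV)"
  have "\<exists>V\<in>\<B>. x \<in> V \<and> V \<subseteq> U" if U: "openin mtopology U" "x \<in> U" for U x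
  proof -
    have xM: "x \<in> M" using U openin_subset by fastforce
    obtain r where r: "r > 0" "mball x r \<subseteq> U" using U unfolding openin_mtopology by blast
    obtain n :: nat where n: "1 / real (Suc n) < r/2"
      using reals_Archimedean[of "r/2"] r(1) by (auto simp: inverse_eq_divide)
    have "\<forall>e>0. \<exists>y\<in>C. y \<in> mball x e"
      using C(3) xM unfolding metric_closure_of by blast
    moreover have "(0::real) < 1 / real (Suc n)" by simp
    ultimately obtain c where c: "c \<in> C" "c \<in> mball x (1 / Suc n)" by blast
    have "x \<in> mball c (1 / Suc n)" using c xM commute by auto
    moreover have "mball c (1 / Suc n) \<subseteq> mball x r"
      by (rule mball_subset) (use c n xM commute[of c x] in auto)
    moreover have "mball c (1 / Suc n) \<in> \<B>" unfolding \<B>_def using c by auto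
    ultimately show ?thesis using r by blast
  qed
  moreover have "countable \<B>" unfolding \<B>_def using C(1) by auto
  moreover have "\<forall>V\<in>\<B>. openin mtopology V" unfolding \<B>_def by auto
  ultimately show ?thesis
    unfolding second_countable_def X by blast
qed

lemma countable_imp_sigma_compactin:
  assumes "countable S" "S \<subseteq> topspace X"
  shows "sigma_compactin X S"
  unfolding sigma_compactin_def
  by (rule exI[of _ "(\<lambda>s. {s}) ` S"]) (use assms in auto)

lemma rational_imp_rim_sigma_compact:
  assumes "rational_space X"
  shows "rim_sigma_compact X"
  using assms countable_imp_sigma_compactin frontier_of_subset_topspace
  unfolding rational_space_def rim_sigma_compact_def by meson

lemma sigma_compactin_nat_Union:
  assumes "sigma_compactin X S"
  obtains K :: "nat \<Rightarrow> 'a set" where "\<And>n. compactin X (K n)" "S = (\<Union>n. K n)"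
proof -
  obtain \<K> where \<K>: "countable \<K>" "\<forall>K\<in>\<K>. compactin X K" "\<Union>\<K> = S"
    using assms unfolding sigma_compactin_def by blast
  let ?K = "from_nat_into (insert {} \<K>)"
  have range: "range ?K = insert {} \<K>" using \<K>(1) by simp
  show thesis
  proof
    show "compactin X (?K n)" for n
      using range \<K>(2) by (metis compactin_empty insertE rangeI)
    show "S = (\<Union>n. ?K n)" using range \<K>(3) by simp
  qed
qed

lemma C_set_empty: "C_set X {}"
  unfolding C_set_def by (rule exI[of _ "{{}}"]) auto

lemma compactin_clopen_separation_from_C_set:
  assumes "compactin X K" "C_set X S" "K \<inter> S = {}"
  obtains R where "closedin X R" "openin X R" "K \<subseteq> R" "R \<inter> S = {}"
proof -
  obtain \<U> where \<U>: "\<forall>U\<in>\<U>. closedin X U \<and> openin X U" "S = topspace X \<inter> \<Inter>\<U>"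
    using assms(2) unfolding C_set_def by blast
  have K: "K \<subseteq> topspace X" using assms(1) compactin_subset_topspace by blast
  define \<V> where "\<V> = (\<lambda>U. topspace X - U) ` \<U>"
  have \<V>: "\<forall>V\<in>\<V>. closedin X V \<and> openin X V" unfolding \<V>_def using \<U>(1) by blast
  have "K \<subseteq> \<Union>\<V>" using assms(3) \<U>(2) K unfolding \<V>_def by blast
  then obtain \<F> where \<F>: "finite \<F>" "\<F> \<subseteq> \<V>" "K \<subseteq> \<Union>\<F>"
    using assms(1) \<V> unfolding compactin_def by meson
  show thesis
  proof
    show "closedin X (\<Union>\<F>)" using \<F> \<V> by (intro closedin_Union) auto
    show "openin X (\<Union>\<F>)" using \<F> \<V> by (intro openin_Union) auto
    show "\<Union>\<F> \<inter> S = {}" using \<F>(2) \<U>(2) unfolding \<V>_def by blast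
  qed (use \<F> in blast)
qed

lemma open_nat_Union_C_set_nbhds:
  assumes "second_countable X" "almost_zero_dimensional X" "openin X B"
  obtains e A :: "nat \<Rightarrow> 'a set"
  where "\<And>i. openin X (e i)" "\<And>i. C_set X (A i)" "\<And>i. e i \<subseteq> A i" "\<And>i. A i \<subseteq> B"
    "B = (\<Union>i. e i)"
proof -
  obtain \<B> where \<B>: "countable \<B>" "\<forall>V\<in>\<B>. openin X V"
    "\<forall>U x. openin X U \<and> x \<in> U \<longrightarrow> (\<exists>V\<in>\<B>. x \<in> V \<and> V \<subseteq> U)"
    using assms(1) unfolding second_countable_def by blast
  define \<C> where "\<C> = insert {} {b \<in> \<B>. \<exists>A. C_set X A \<and> b \<subseteq> A \<and> A \<subseteq> B}"
  have "\<forall>b\<in>\<C>. \<exists>A. C_set X A \<and> b \<subseteq> A \<and> A \<subseteq> B"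
    unfolding \<C>_def using C_set_empty by blast
  then obtain Af where Af: "\<forall>b\<in>\<C>. C_set X (Af b) \<and> b \<subseteq> Af b \<and> Af b \<subseteq> B"
    by (rule bchoice[elim_format]) blast
  have "countable \<C>"
    unfolding \<C>_def by (intro countable_insert countable_subset[OF _ \<B>(1)]) blast
  then have range: "range (from_nat_into \<C>) = \<C>" by (simp add: \<C>_def)
  have "y \<in> \<Union>\<C>" if "y \<in> B" for y
  proof -
    have "neighbourhood_base_of (C_set X) X"
      using assms(2) unfolding almost_zero_dimensional_def .
    then obtain V A where "openin X V" "C_set X A" "y \<in> V" "V \<subseteq> A" "A \<subseteq> B"
      using assms(3) \<open>y \<in> B\<close> unfolding neighbourhood_base_of by meson
    moreover obtain b where "b \<in> \<B>" "y \<in> b" "b \<subseteq> V"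
      using \<B>(3) \<open>openin X V\<close> \<open>y \<in> V\<close> by blast
    ultimately have "b \<in> \<C>" unfolding \<C>_def by blast
    with \<open>y \<in> b\<close> show ?thesis by blast
  qed
  moreover have "\<Union>\<C> \<subseteq> B" using Af by blast
  ultimately have "B = \<Union>\<C>" by blast
  show thesis
  proof
    fix i
    have "from_nat_into \<C> i \<in> \<C>" using range by blast
    then show "openin X (from_nat_into \<C> i)" using \<B>(2) unfolding \<C>_def by auto
    show "C_set X (Af (from_nat_into \<C> i))" "from_nat_into \<C> i \<subseteq> Af (from_nat_into \<C> i)"
      "Af (from_nat_into \<C> i) \<subseteq> B"
      using Af \<open>from_nat_into \<C> i \<in> \<C>\<close> by blast+
  next
    show "B = (\<Union>i. from_nat_into \<C> i)" using \<open>B = \<Union>\<C>\<close> range by simp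
  qed
qed

lemma clopen_diff_Union_clopen_frontier_cover:
  fixes R e :: "nat \<Rightarrow> 'a set"
  assumes "openin X B" "X frontier_of B \<subseteq> (\<Union>n. R n)"
    and R: "\<And>n. closedin X (R n)" "\<And>n. openin X (R n)"
    and e: "\<And>i. openin X (e i)" "B \<subseteq> (\<Union>i. e i)" "\<And>i n. i \<le> n \<Longrightarrow> R n \<inter> e i = {}"
  shows "closedin X (B - (\<Union>n. R n))" "openin X (B - (\<Union>n. R n))"
proof -
  define W where "W = B - (\<Union>n. R n)"
  have "\<exists>T. openin X T \<and> y \<in> T \<and> T \<subseteq> W" if "y \<in> W" for y
  proof -
    obtain i where i: "y \<in> e i" using \<open>y \<in> W\<close> e(2) unfolding W_def by blast
    define T where "T = (e i \<inter> B) - \<Union>(R ` {..<i})"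
    have "openin X T"
      unfolding T_def using assms(1) e(1) R(1)
      by (intro openin_diff openin_Int closedin_Union finite_imageI) auto
    moreover have "T \<subseteq> W"
      unfolding T_def W_def using e(3)[of i] not_less by blast
    ultimately show ?thesis using that i unfolding T_def W_def by blast
  qed
  then have "openin X W" by (subst openin_subopen) blast
  then show "openin X (B - (\<Union>n. R n))" unfolding W_def .
  have B: "B \<subseteq> X closure_of B" "B \<subseteq> topspace X"
    using openin_subset[OF assms(1)] closure_of_subset by auto
  have closure: "X closure_of B \<subseteq> B \<union> (\<Union>n. R n)"
    using assms(2) frontier_of_openin[OF assms(1)] by auto
  have "topspace X - W = (\<Union>n. R n) \<union> (topspace X - X closure_of B)"
  proof (intro equalityI subsetI)
    fix y assume y: "y \<in> topspace X - W"
    show "y \<in> (\<Union>n. R n) \<union> (topspace X - X closure_of B)"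
    proof (cases "y \<in> (\<Union>n. R n)")
      case False
      then have "y \<notin> X closure_of B" using y closure unfolding W_def by blast
      then show ?thesis using y by blast
    qed blast
  next
    fix y assume "y \<in> (\<Union>n. R n) \<union> (topspace X - X closure_of B)"
    moreover have "(\<Union>n. R n) \<subseteq> topspace X" using openin_subset[OF R(2)] by blast
    ultimately show "y \<in> topspace X - W" using B(1) unfolding W_def by blast
  qed
  moreover have "openin X ((\<Union>n. R n) \<union> (topspace X - X closure_of B))"
    using R(2) by (intro openin_Un openin_Union openin_diff) auto
  ultimately show "closedin X (B - (\<Union>n. R n))"
    unfolding closedin_def W_def using B by auto
qed

lemma clopen_nbhd_in_open_with_sigma_compact_frontier:
  assumes "second_countable X" "almost_zero_dimensional X"
    and "openin X B" "sigma_compactin X (X frontier_of B)" "x \<in> B"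
  obtains W where "closedin X W" "openin X W" "x \<in> W" "W \<subseteq> B"
proof -
  obtain e A :: "nat \<Rightarrow> 'a set"
    where eA: "\<And>i. openin X (e i)" "\<And>i. C_set X (A i)" "\<And>i. e i \<subseteq> A i"
      "\<And>i. A i \<subseteq> B" "B = (\<Union>i. e i)"
    using open_nat_Union_C_set_nbhds[OF assms(1-3)] by blast
  obtain K :: "nat \<Rightarrow> 'a set" where K: "\<And>n. compactin X (K n)" "X frontier_of B = (\<Union>n. K n)"
    using sigma_compactin_nat_Union[OF assms(4)] by blast
  obtain j where j: "x \<in> e j" using assms(5) eA(5) by blast
  have "X frontier_of B \<inter> B = {}"
    unfolding frontier_of_openin[OF assms(3)] by blast
  then have "K n \<inter> A i = {}" for n i
    using K(2) eA(4)[of i] by blast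
  then have separation:
    "\<exists>R. closedin X R \<and> openin X R \<and> K n \<subseteq> R \<and> R \<inter> A i = {}" for n i
    by (meson K(1) eA(2) compactin_clopen_separation_from_C_set)
  define Rf where "Rf n i = (SOME R. closedin X R \<and> openin X R \<and> K n \<subseteq> R \<and> R \<inter> A i = {})"
    for n i
  have Rf: "closedin X (Rf n i) \<and> openin X (Rf n i) \<and> K n \<subseteq> Rf n i \<and> Rf n i \<inter> A i = {}"
    for n i
    unfolding Rf_def by (rule someI_ex[OF separation])
  text \<open>Intersecting also with \<open>Rf n j\<close> keeps every \<open>R n\<close> away from \<open>x\<close>.\<close>
  define R where "R n = \<Inter>(Rf n ` insert j {..n})" for n
  have "closedin X (R n)" for n
    unfolding R_def by (rule closedin_Inter) (use Rf in auto)
  moreover have "openin X (R n)" for n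
    unfolding R_def by (rule openin_Inter) (use Rf in auto)
  ultimately have R: "\<And>n. closedin X (R n)" "\<And>n. openin X (R n)" .
  have K_R: "K n \<subseteq> R n" for n
    unfolding R_def by (intro INF_greatest) (use Rf in blast)
  have frontier: "X frontier_of B \<subseteq> (\<Union>n. R n)"
    unfolding K(2) by (intro UN_mono) (auto simp: K_R)
  have R_A: "R n \<inter> A i = {}" if "i \<le> n \<or> i = j" for n i
  proof -
    have "R n \<subseteq> Rf n i" unfolding R_def using that by (intro INF_lower) auto
    then show ?thesis using Rf[of n i] by blast
  qed
  have "R n \<inter> e i = {}" if "i \<le> n" for n i
    using R_A[of i n] eA(3)[of i] that by blast
  note W = clopen_diff_Union_clopen_frontier_cover[OF assms(3) frontier R eA(1) equalityD1[OF eA(5)] this]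
  show thesis
  proof
    show "closedin X (B - (\<Union>n. R n))" "openin X (B - (\<Union>n. R n))"
      using W by blast+
    show "x \<in> B - (\<Union>n. R n)" using assms(5) j eA(3)[of j] R_A by blast
  qed blast
qed

lemma rim_sigma_compact_imp_dim_le_0:
  assumes "second_countable X" "almost_zero_dimensional X" "rim_sigma_compact X"
  shows "X dim_le 0"
  unfolding dimension_le_0_neighbourhood_base_of_clopen neighbourhood_base_of
proof (intro allI impI)
  fix U x assume "openin X U \<and> x \<in> U"
  then obtain B where B: "openin X B" "sigma_compactin X (X frontier_of B)" "x \<in> B" "B \<subseteq> U"
    using assms(3) unfolding rim_sigma_compact_def by meson
  obtain W where "closedin X W" "openin X W" "x \<in> W" "W \<subseteq> B"
    using clopen_nbhd_in_open_with_sigma_compact_frontier[OF assms(1,2) B(1-3)] by blast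
  with B(4)
  show "\<exists>U' V. openin X U' \<and> (closedin X V \<and> openin X V) \<and> x \<in> U' \<and> U' \<subseteq> V \<and> V \<subseteq> U"
    by blast
qed

theorem corollary4p6:
  fixes X :: "'a topology"
  assumes "metrizable_space X" and "separable_space X"
    and "almost_zero_dimensional X"
    and "rim_sigma_compact X \<or> rational_space X"
  shows "X dim_le 0"
  using rim_sigma_compact_imp_dim_le_0 metrizable_separable_imp_second_countable
    rational_imp_rim_sigma_compact assms by blast

end
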